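(* Let $D\mathcal{M}$ be an $\ell c$DCB system, linearly conjugate via $Q=\mathrm{diag}(q_1,\dots,q_n)$ to the DCB system $D\tilde{\mathcal{M}}$, and let $\theta\in C([-\tau,0];\mathbb{R}^n_{>0})$. Then the set $\mathcal H_\theta$ contains exactly one positive equilibrium of $D\mathcal{M}$; namely $x^*=Q\tilde x^*$, where $\tilde x^*$ is the unique positive equilibrium of $D\tilde{\mathcal{M}}$ in its stoichiometric compatibility class containing $Q^{-1}\theta$.
   Context: For $x,y\in\mathbb{R}^n$ with $x\ge 0$, write $x^{y}=\prod_{j=1}^n x_j^{y_j}$. A delayed mass-action system on species $X_1,\dots,X_n$ consists of reactions $R_i: y_{\cdot i}\to y'_{\cdot i}$, $i=1,\dots,r$, with complexes $y_{\cdot i},y'_{\cdot i}\in\mathbb{R}^n_{\ge0}$, rate constants $\kappa_i>0$ and delays $\tau_i\ge0$; with $\tau\ge\max_i\tau_i$, its dynamics is the delay differential equation $\dot x(t)=F(x_t):=\sum_{i=1}^r\kappa_i\big[x(t-\tau_i)^{y_{\cdot i}}y'_{\cdot i}-x(t)^{y_{\cdot i}}y_{\cdot i}\big]$, $t\ge 0$, where $x_t(s)=x(t+s)$, $s\in[-\tau,0]$, with initial function $\theta\in C([-\tau,0];\mathbb{R}^n_{\ge0})$. Its stoichiometric subspace is $\mathscr S=\mathrm{span}\{y'_{\cdot i}-y_{\cdot i}\}$. A positive equilibrium is $x^*\in\mathbb{R}^n_{>0}$ with $\sum_i\kappa_i (x^* )^{y_{\cdot i}}(y'_{\cdot i}-y_{\cdot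 i})=0$ (viewed as a constant function). The stoichiometric compatibility class containing $\theta$ is $\mathcal P_\theta=\{\psi\in C([-\tau,0];\mathbb{R}^n_{\ge0}): c_a(\psi)=c_a(\theta)\ \forall a\in\mathscr S^\perp\}$, where $c_a(\psi)=a^\top\big[\psi(0)+\sum_{i=1}^r\big(\kappa_i\int_{-\tau_i}^0\psi(s)^{y_{\cdot i}}ds\big)y_{\cdot i}\big]$. A vector $\bar x\in\mathbb{R}^n_{>0}$ is a complex balanced equilibrium if for every complex $\eta$ of the network $\sum_{i: y_{\cdot i}=\eta}\kappa_i\bar x^{y_{\cdot i}}=\sum_{i: y'_{\cdot i}=\eta}\kappa_i\bar x^{y_{\cdot i}}$. A delayed complex balanced (DCB) system is a delayed mass-action system admitting a positive complex balanced equilibrium; each stoichiometric compatibility class $\mathcal P_\theta$ of a DCB system with $\theta$ positive contains exactly one positive equilibrium. Two delayed mass-action systems $D\mathcal{M}$ (right-hand side $F$) and $D\tilde{\mathcal{M}}$ (right-hand side $\tilde F$) on the same species are linearly conjugate via a positive diagonal matrix $Q$ if $F(Q\psi)=Q\tilde F(\psi)$ for all $\psi\in C([-\tau,0];\mathbb{R}^n_{>0})$. An $\ell c$DCB system is one linearly conjugate via some positive diagonal matrix to a DCB system. If $D\tilde{\mathcal{M}}$ has reactions $y_{\cdot i}\to\tilde y'_{\cdot i}$, rate constants $\tilde\kappa_i$, delays $\tau_i$ ($i=1,\dots,\tilde r$) and stoichiometric subspace $\tilde{\mathscr S}$, define $h_a(\psi)=a^\top\big[\psi(0)+\sum_{i=1}^{\tilde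 r}\big(\tilde\kappa_i\prod_{j=1}^n q_j^{-y_{ji}}\int_{-\tau_i}^0\psi(s)^{y_{\cdot i}}ds\big)Qy_{\cdot i}\big]$ and $\mathcal H_\theta=\{\psi\in C([-\tau,0];\mathbb{R}^n_{\ge0}): h_a(\psi)=h_a(\theta)\ \forall a\in(Q^{-1})^\top\tilde{\mathscr S}^\perp\}$. *)

theory Defs
  imports "HOL-Analysis.Analysis"
begin

text \<open>A delayed mass-action system is given by the number of reactions r, and for each
  reaction index i < r its source complex, product complex, rate constant and delay.\<close>

record 'n dms =
  nreac :: nat
  src   :: "nat \<Rightarrow> real^'n"
  prd   :: "nat \<Rightarrow> real^'n"
  rate  :: "nat \<Rightarrow> real"
  delay :: "nat \<Rightarrow> real"

text \<open>Monomial x^y = prod_j x_j^{y_j}, with the convention 0^0 = 1.\<close>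
definition mpow :: "real^'n \<Rightarrow> real^'n \<Rightarrow> real" where
  "mpow x y = (\<Prod>j\<in>UNIV. if y $ j = 0 then 1 else x $ j powr (y $ j))"

definition valid_dms :: "real \<Rightarrow> 'n::finite dms \<Rightarrow> bool" where
  "valid_dms \<tau> M \<longleftrightarrow> 0 \<le> \<tau> \<and>
     (\<forall>i<nreac M. 0 < rate M i \<and> 0 \<le> delay M i \<and> delay M i \<le> \<tau> \<and>
        (\<forall>j. 0 \<le> src M i $ j) \<and> (\<forall>j. 0 \<le> prd M i $ j))"

definition Cnn :: "real \<Rightarrow> (real \<Rightarrow> real^'n::finite) set" where
  "Cnn \<tau> = {\<psi>. continuous_on {-\<tau>..0} \<psi> \<and> (\<forall>s\<in>{-\<tau>..0}. \<forall>j. 0 \<le> \<psi> s $ j)}"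

definition Cpos :: "real \<Rightarrow> (real \<Rightarrow> real^'n::finite) set" where
  "Cpos \<tau> = {\<psi>. continuous_on {-\<tau>..0} \<psi> \<and> (\<forall>s\<in>{-\<tau>..0}. \<forall>j. 0 < \<psi> s $ j)}"

definition rhs :: "'n::finite dms \<Rightarrow> (real \<Rightarrow> real^'n) \<Rightarrow> real^'n" where
  "rhs M \<psi> = (\<Sum>i<nreac M. rate M i *\<^sub>R
      (mpow (\<psi> (- delay M i)) (src M i) *\<^sub>R prd M i - mpow (\<psi> 0) (src M i) *\<^sub>R src M i))"

definition diagmul :: "real^'n::finite \<Rightarrow> real^'n \<Rightarrow> real^'n" where
  "diagmul q x = (\<chi> j. q $ j * x $ j)"

definition stoich :: "'n::finite dms \<Rightarrow> (real^'n) set" where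
  "stoich M = span {prd M i - src M i | i. i < nreac M}"

definition orth :: "(real^'n::finite) set \<Rightarrow> (real^'n) set" where
  "orth S = {a. \<forall>s\<in>S. a \<bullet> s = 0}"

definition pos_equilibrium :: "'n::finite dms \<Rightarrow> real^'n \<Rightarrow> bool" where
  "pos_equilibrium M x \<longleftrightarrow> (\<forall>j. 0 < x $ j) \<and>
     (\<Sum>i<nreac M. (rate M i * mpow x (src M i)) *\<^sub>R (prd M i - src M i)) = 0"

definition complexes :: "'n::finite dms \<Rightarrow> (real^'n) set" where
  "complexes M = {src M i | i. i < nreac M} \<union> {prd M i | i. i < nreac M}"

definition complex_balanced :: "'n::finite dms \<Rightarrow> real^'n \<Rightarrow> bool" where
  "complex_balanced M x \<longleftrightarrow> (\<forall>j. 0 < x $ j) \<and>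
     (\<forall>\<eta>\<in>complexes M.
        (\<Sum>i\<in>{i. i < nreac M \<and> src M i = \<eta>}. rate M i * mpow x (src M i)) =
        (\<Sum>i\<in>{i. i < nreac M \<and> prd M i = \<eta>}. rate M i * mpow x (src M i)))"

definition DCB :: "real \<Rightarrow> 'n::finite dms \<Rightarrow> bool" where
  "DCB \<tau> M \<longleftrightarrow> valid_dms \<tau> M \<and> (\<exists>x. complex_balanced M x)"

definition cfun :: "'n::finite dms \<Rightarrow> real^'n \<Rightarrow> (real \<Rightarrow> real^'n) \<Rightarrow> real" where
  "cfun M a \<psi> = a \<bullet> (\<psi> 0 + (\<Sum>i<nreac M.
      (rate M i * integral {- delay M i..0} (\<lambda>s. mpow (\<psi> s) (src M i))) *\<^sub>R src M i))"

definition compat_class :: "real \<Rightarrow> 'n::finite dms \<Rightarrow> (real \<Rightarrow> real^'n) \<Rightarrow> (real \<Rightarrow> real^'n) set" where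
  "compat_class \<tau> M \<theta> = {\<psi>\<in>Cnn \<tau>. \<forall>a\<in>orth (stoich M). cfun M a \<psi> = cfun M a \<theta>}"

definition lin_conj :: "real \<Rightarrow> 'n::finite dms \<Rightarrow> 'n dms \<Rightarrow> real^'n \<Rightarrow> bool" where
  "lin_conj \<tau> M Mt q \<longleftrightarrow> (\<forall>j. 0 < q $ j) \<and>
     (\<forall>\<psi>\<in>Cpos \<tau>. rhs M (\<lambda>s. diagmul q (\<psi> s)) = diagmul q (rhs Mt \<psi>))"

definition hfun :: "'n::finite dms \<Rightarrow> real^'n \<Rightarrow> real^'n \<Rightarrow> (real \<Rightarrow> real^'n) \<Rightarrow> real" where
  "hfun Mt q a \<psi> = a \<bullet> (\<psi> 0 + (\<Sum>i<nreac Mt.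
      (rate Mt i * (\<Prod>j\<in>UNIV. q $ j powr (- (src Mt i $ j))) *
        integral {- delay Mt i..0} (\<lambda>s. mpow (\<psi> s) (src Mt i))) *\<^sub>R diagmul q (src Mt i)))"

definition Hset :: "real \<Rightarrow> 'n::finite dms \<Rightarrow> real^'n \<Rightarrow> (real \<Rightarrow> real^'n) \<Rightarrow> (real \<Rightarrow> real^'n) set" where
  "Hset \<tau> Mt q \<theta> = {\<psi>\<in>Cnn \<tau>.
     \<forall>a\<in>{diagmul (\<chi> j. inverse (q $ j)) b | b. b \<in> orth (stoich Mt)}.
        hfun Mt q a \<psi> = hfun Mt q a \<theta>}"

end

theory Submission
  imports Defs
begin

text \<open>The conjugacy F(Q\<psi>) = Q F'(\<psi>) maps positive equilibria of the DCB system M' to those of M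
  by x \<mapsto> Qx, and h is built so that h_(Q^-T b)(\<psi>) = c'_b(Q^-1 \<psi>); hence H_\<theta> corresponds to the
  compatibility class of Q^-1 \<theta> in M', and everything reduces to that DCB system. There, in
  logarithmic coordinates u = ln x, the positive equilibria form the affine subspace ln x' + S^\<bottom>
  through a complex balanced equilibrium x' (Horn\<dash>Jackson). On this subspace the conditions
  c_a(x) = c_a(\<theta>), a \<in> S^\<bottom>, are the critical point equations of the strictly convex, coercive
  potential \<Sum>_j e^(u_j) + \<Sum>_i \<kappa>_i \<tau>_i e^(y_i\<cdot>u) - c\<cdot>u, which therefore have exactly one solution.\<close>

section \<open>Logarithmic coordinates\<close>

definition ln_vec :: "real^'n::finite \<Rightarrow> real^'n" where
  "ln_vec x = (\<chi> j. ln (x $ j))"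

definition exp_vec :: "real^'n::finite \<Rightarrow> real^'n" where
  "exp_vec u = (\<chi> j. exp (u $ j))"

lemma mpow_eq_exp_inner:
  assumes "\<forall>j. 0 < x $ j"
  shows "mpow x y = exp (y \<bullet> ln_vec x)"
proof -
  have "mpow x y = (\<Prod>j\<in>UNIV. exp (y $ j * ln (x $ j)))"
    unfolding mpow_def
  proof (intro prod.cong refl)
    fix j
    have "x $ j \<noteq> 0" using assms by (metis less_irrefl)
    then show "(if y $ j = 0 then 1 else x $ j powr y $ j) = exp (y $ j * ln (x $ j))"
      by (simp add: powr_def)
  qed
  also have "\<dots> = exp (y \<bullet> ln_vec x)"
    by (simp add: exp_sum inner_vec_def ln_vec_def)
  finally show ?thesis .
qed

lemma mpow_exp_vec: "mpow (exp_vec u) y = exp (y \<bullet> u)"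
  by (subst mpow_eq_exp_inner) (auto simp: exp_vec_def ln_vec_def)

lemma exp_vec_ln_vec: "\<forall>j. 0 < x $ j \<Longrightarrow> exp_vec (ln_vec x) = x"
  by (simp add: exp_vec_def ln_vec_def vec_eq_iff)

lemma exp_vec_pos: "0 < exp_vec u $ j"
  by (simp add: exp_vec_def)

lemma mpow_nonneg: "0 \<le> mpow x y"
  unfolding mpow_def by (intro prod_nonneg) auto

lemma add_one_less_exp:
  fixes x :: real
  assumes "x \<noteq> 0"
  shows "1 + x < exp x"
proof (cases "0 \<le> 1 + x/2")
  case True
  have "(1 + x/2)^2 \<le> exp (x/2) ^ 2"
    using True exp_ge_add_one_self[of "x/2"] by (intro power_mono) auto
  also have "\<dots> = exp x" by (simp add: power2_eq_square exp_add[symmetric])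
  finally have "(1 + x/2)^2 \<le> exp x" .
  moreover have "0 < x * x" using assms by (metis linorder_neqE_linordered_idom mult_neg_neg mult_pos_pos)
  then have "1 + x < (1 + x/2)^2" by (simp add: power2_eq_square algebra_simps)
  ultimately show ?thesis by simp
next
  case False
  then show ?thesis using exp_gt_zero[of x] by linarith
qed

lemma exp_tangent_gap_nonneg: "0 \<le> exp b - exp a - exp a * (b - a :: real)"
proof -
  have "exp a * (1 + (b - a)) \<le> exp a * exp (b - a)" by simp
  then show ?thesis by (simp add: exp_add[symmetric] algebra_simps)
qed

lemma exp_tangent_gap_eq_0_iff: "exp b - exp a - exp a * (b - a) = 0 \<longleftrightarrow> a = (b::real)"
proof
  assume gap: "exp b - exp a - exp a * (b - a) = 0"
  show "a = b"
  proof (rule ccontr)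
    assume "a \<noteq> b"
    then have "exp a * (1 + (b - a)) < exp a * exp (b - a)"
      by (intro mult_strict_left_mono add_one_less_exp) auto
    with gap show False by (simp add: exp_add[symmetric] algebra_simps)
  qed
qed simp

lemma weighted_exp_tangent_gaps_eq_0D:
  fixes a b f :: "'i \<Rightarrow> real"
  assumes I: "finite I" and f: "\<And>i. i \<in> I \<Longrightarrow> 0 < f i"
    and sum_0: "(\<Sum>i\<in>I. f i * (exp (b i) - exp (a i) - exp (a i) * (b i - a i))) = 0"
    and i: "i \<in> I"
  shows "a i = b i"
proof -
  define gap where "gap i = exp (b i) - exp (a i) - exp (a i) * (b i - a i)" for i
  have nonneg: "0 \<le> f i * gap i" if "i \<in> I" for i
    using f[OF that] exp_tangent_gap_nonneg by (simp add: gap_def less_imp_le)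
  have "\<forall>i\<in>I. f i * gap i = 0"
    using iffD1[OF sum_nonneg_eq_0_iff[OF I nonneg]] sum_0 by (simp only: gap_def)
  then have "gap i = 0" using f[OF i] i by force
  then show ?thesis unfolding gap_def exp_tangent_gap_eq_0_iff .
qed

lemma exp_monotone_product_nonneg: "0 \<le> (exp p - exp q) * (p - q :: real)"
  by (cases "p \<le> q") (auto intro: mult_nonpos_nonpos mult_nonneg_nonneg)

lemma exp_monotone_product_eq_0_iff: "(exp p - exp q) * (p - q) = 0 \<longleftrightarrow> p = (q::real)"
  by auto

lemma exp_ge_tangent_at_ln:
  fixes c t :: real
  assumes "0 < c"
  shows "c * (1 + t - ln c) \<le> exp t"
proof -
  have "1 + (t - ln c) \<le> exp (t - ln c)" by (rule exp_ge_add_one_self)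
  also have "\<dots> = exp t / c" using assms by (simp add: exp_diff)
  finally show ?thesis using assms by (simp add: field_simps)
qed

lemma exp_minus_linear_sublevel_bounds:
  fixes c t B :: real
  assumes c: "0 < c" and h: "exp t - c * t \<le> B"
  shows "-B/c \<le> t" and "t \<le> (B - 2*c + 2*c*ln (2*c))/c"
proof -
  have "-B \<le> c * t" using h exp_gt_zero[of t] by linarith
  then show "-B/c \<le> t" using c by (simp add: field_simps)
  have "(2*c) * (1 + t - ln (2*c)) \<le> exp t" using c by (intro exp_ge_tangent_at_ln) simp
  then have "c * t \<le> B - 2*c + 2*c*ln (2*c)" using h by (simp add: algebra_simps)
  then show "t \<le> (B - 2*c + 2*c*ln (2*c))/c" using c by (simp add: field_simps)
qed

lemma bounded_exp_minus_linear_sublevel: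
  fixes c :: "real^'n::finite"
  assumes c: "\<forall>j. 0 < c $ j"
  shows "bounded {u. (\<Sum>j\<in>UNIV. exp (u $ j) - c $ j * u $ j) \<le> B}"
proof -
  define m where "m j = c $ j - c $ j * ln (c $ j)" for j
  have m_le: "m j \<le> exp t - c $ j * t" for j t
    using exp_ge_tangent_at_ln[of "c $ j" t] c by (simp add: m_def algebra_simps)
  define Bd where "Bd j = B - (\<Sum>l\<in>UNIV. m l) + m j" for j
  define lo where "lo = (\<chi> j. - Bd j / c $ j)"
  define hi where "hi = (\<chi> j. (Bd j - 2 * c $ j + 2 * c $ j * ln (2 * c $ j)) / c $ j)"
  have "{u. (\<Sum>j\<in>UNIV. exp (u $ j) - c $ j * u $ j) \<le> B} \<subseteq> cbox lo hi"
  proof (clarsimp simp: mem_box_cart)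
    fix u :: "real^'n" and j
    assume u: "(\<Sum>j\<in>UNIV. exp (u $ j) - c $ j * u $ j) \<le> B"
    have "exp (u $ j) - c $ j * u $ j - m j \<le> (\<Sum>l\<in>UNIV. exp (u $ l) - c $ l * u $ l - m l)"
      by (rule member_le_sum) (use m_le in auto)
    also have "\<dots> \<le> B - (\<Sum>l\<in>UNIV. m l)" using u by (simp add: sum_subtractf)
    finally have "exp (u $ j) - c $ j * u $ j \<le> Bd j" by (simp add: Bd_def)
    from exp_minus_linear_sublevel_bounds[OF c[rule_format] this]
    show "lo $ j \<le> u $ j \<and> u $ j \<le> hi $ j" by (simp add: lo_def hi_def)
  qed
  then show ?thesis using bounded_cbox bounded_subset by blast
qed

lemma continuous_attains_inf_coercive:
  fixes f :: "'a::heine_borel \<Rightarrow> real"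
  assumes S: "closed S" "x0 \<in> S" and f: "continuous_on S f"
    and bdd: "bounded {x\<in>S. f x \<le> f x0}"
  shows "\<exists>x\<in>S. \<forall>y\<in>S. f x \<le> f y"
proof -
  define K where "K = {x\<in>S. f x \<le> f x0}"
  have "K = S \<inter> f -` {..f x0}" by (auto simp: K_def)
  then have "compact K"
    using continuous_closed_preimage[OF f S(1)] bdd by (simp add: K_def compact_eq_bounded_closed)
  moreover have "x0 \<in> K" using S by (simp add: K_def)
  moreover have "continuous_on K f" using f by (rule continuous_on_subset) (auto simp: K_def)
  ultimately obtain x where "x \<in> K" "\<forall>y\<in>K. f x \<le> f y"
    using continuous_attains_inf[of K f] by blast
  then show ?thesis unfolding K_def by force
qed

lemma orth_span: "orth (span B) = orth B"
proof
  show "orth (span B) \<subseteq> orth B" unfolding orth_def using span_base by blast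
  show "orth B \<subseteq> orth (span B)"
  proof
    fix a assume "a \<in> orth B"
    then have "span B \<subseteq> {s. a \<bullet> s = 0}"
      by (intro span_minimal) (auto simp: orth_def subspace_def inner_add_right)
    then show "a \<in> orth (span B)" unfolding orth_def by auto
  qed
qed

lemma orth_stoich: "orth (stoich M) = {a. \<forall>i<nreac M. a \<bullet> (prd M i - src M i) = 0}"
  unfolding stoich_def orth_span by (auto simp: orth_def)

lemma subspace_orth: "subspace (orth A)"
  by (auto simp: subspace_def orth_def inner_add_left)

lemma closed_orth: "closed (orth A)"
proof -
  have "orth A = (\<Inter>s\<in>A. {a. a \<bullet> s = 0})" by (auto simp: orth_def)
  then show ?thesis by (simp add: closed_INT closed_Collect_eq continuous_intros)
qed

section \<open>Complex balanced equilibria\<close>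

lemma complexes_eq: "complexes M = src M ` {..<nreac M} \<union> prd M ` {..<nreac M}"
  by (auto simp: complexes_def)

lemma sum_group_by_complex:
  fixes g :: "real^'n::finite \<Rightarrow> 'b::real_vector"
  assumes "h ` {..<nreac M} \<subseteq> complexes M"
  shows "(\<Sum>i<nreac M. f i *\<^sub>R g (h i)) =
         (\<Sum>\<eta>\<in>complexes M. (\<Sum>i\<in>{i. i < nreac M \<and> h i = \<eta>}. f i) *\<^sub>R g \<eta>)"
proof -
  have "(\<Sum>i<nreac M. f i *\<^sub>R g (h i)) =
     (\<Sum>\<eta>\<in>complexes M. \<Sum>i\<in>{i. i \<in> {..<nreac M} \<and> h i = \<eta>}. f i *\<^sub>R g (h i))"
    by (rule sum.group[symmetric]) (use assms in \<open>auto simp: complexes_eq\<close>)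
  also have "\<dots> = (\<Sum>\<eta>\<in>complexes M. (\<Sum>i\<in>{i. i < nreac M \<and> h i = \<eta>}. f i) *\<^sub>R g \<eta>)"
    by (intro sum.cong refl) (auto simp: scaleR_sum_left)
  finally show ?thesis .
qed

lemma complex_balanced_sum_prd_eq_src:
  fixes g :: "real^'n::finite \<Rightarrow> 'b::real_vector"
  assumes "complex_balanced M x"
  shows "(\<Sum>i<nreac M. (rate M i * mpow x (src M i)) *\<^sub>R g (prd M i)) =
         (\<Sum>i<nreac M. (rate M i * mpow x (src M i)) *\<^sub>R g (src M i))"
proof -
  have "(\<Sum>i\<in>{i. i < nreac M \<and> prd M i = \<eta>}. rate M i * mpow x (src M i)) =
        (\<Sum>i\<in>{i. i < nreac M \<and> src M i = \<eta>}. rate M i * mpow x (src M i))"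
    if "\<eta> \<in> complexes M" for \<eta>
    using assms that unfolding complex_balanced_def by auto
  then show ?thesis
    by (subst (1 2) sum_group_by_complex) (auto simp: complexes_eq)
qed

definition net_rate :: "'n::finite dms \<Rightarrow> real^'n \<Rightarrow> real^'n" where
  "net_rate M x = (\<Sum>i<nreac M. (rate M i * mpow x (src M i)) *\<^sub>R (prd M i - src M i))"

lemma rhs_const: "rhs M (\<lambda>_. x) = net_rate M x"
  unfolding rhs_def net_rate_def by (intro sum.cong refl) (simp add: scaleR_diff_right)

lemma pos_equilibrium_iff: "pos_equilibrium M x \<longleftrightarrow> (\<forall>j. 0 < x $ j) \<and> net_rate M x = 0"
  by (simp add: pos_equilibrium_def net_rate_def)

lemma net_rate_exp_vec:
  assumes "\<forall>j. 0 < xb $ j"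
  shows "net_rate M (exp_vec u) = (\<Sum>i<nreac M.
           (rate M i * mpow xb (src M i) * exp ((u - ln_vec xb) \<bullet> src M i)) *\<^sub>R (prd M i - src M i))"
  unfolding net_rate_def mpow_exp_vec mpow_eq_exp_inner[OF assms]
  by (intro sum.cong refl) (simp add: exp_add[symmetric] inner_diff_right inner_commute)

text \<open>The Horn\<dash>Jackson description of the positive equilibria of a complex balanced system.\<close>

lemma complex_balanced_net_rate_eq_0_iff:
  assumes cb: "complex_balanced M xb" and v: "valid_dms \<tau> M"
  shows "net_rate M (exp_vec u) = 0 \<longleftrightarrow> u - ln_vec xb \<in> orth (stoich M)"
proof -
  define w where "w = u - ln_vec xb"
  define f where "f i = rate M i * mpow xb (src M i)" for i
  define a where "a i = w \<bullet> src M i" for i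
  define b where "b i = w \<bullet> prd M i" for i
  have xb: "\<forall>j. 0 < xb $ j" using cb by (simp add: complex_balanced_def)
  have f_pos: "0 < f i" if "i < nreac M" for i
    using v that unfolding valid_dms_def f_def mpow_eq_exp_inner[OF xb] by auto
  have rate: "net_rate M (exp_vec u) = (\<Sum>i<nreac M. (f i * exp (a i)) *\<^sub>R (prd M i - src M i))"
    unfolding net_rate_exp_vec[OF xb] by (simp add: f_def a_def w_def)
  have swap: "(\<Sum>i<nreac M. f i *\<^sub>R g (prd M i)) = (\<Sum>i<nreac M. f i *\<^sub>R g (src M i))"
    for g :: "real^_ \<Rightarrow> 'b::real_vector"
    unfolding f_def by (rule complex_balanced_sum_prd_eq_src[OF cb])
  have orth_iff: "w \<in> orth (stoich M) \<longleftrightarrow> (\<forall>i<nreac M. a i = b i)"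
    by (auto simp: orth_stoich a_def b_def inner_diff_right)
  show ?thesis
    unfolding w_def[symmetric] orth_iff
  proof
    assume eq: "net_rate M (exp_vec u) = 0"
    have "(\<Sum>i<nreac M. f i * (exp (b i) - exp (a i) - exp (a i) * (b i - a i)))
        = (\<Sum>i<nreac M. f i * exp (b i)) - (\<Sum>i<nreac M. f i * exp (a i))
          - w \<bullet> net_rate M (exp_vec u)"
      unfolding rate inner_sum_right
      by (simp add: sum_subtractf[symmetric] a_def b_def inner_diff_right algebra_simps)
    also have "\<dots> = 0"
      using eq swap[of "\<lambda>\<eta>. exp (w \<bullet> \<eta>)"] by (simp add: a_def b_def)
    finally show "\<forall>i<nreac M. a i = b i"
      using weighted_exp_tangent_gaps_eq_0D[of "{..<nreac M}" f] f_pos by blast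
  next
    assume ab: "\<forall>i<nreac M. a i = b i"
    have "net_rate M (exp_vec u) = (\<Sum>i<nreac M. f i *\<^sub>R (exp (w \<bullet> prd M i) *\<^sub>R prd M i))
        - (\<Sum>i<nreac M. f i *\<^sub>R (exp (w \<bullet> src M i) *\<^sub>R src M i))"
      unfolding rate sum_subtractf[symmetric] using ab
      by (intro sum.cong refl) (simp add: a_def b_def scaleR_diff_right)
    then show "net_rate M (exp_vec u) = 0"
      using swap[of "\<lambda>\<eta>. exp (w \<bullet> \<eta>) *\<^sub>R \<eta>"] by simp
  qed
qed

section \<open>Conservation laws evaluated at constant histories\<close>

definition conserved_vec :: "'n::finite dms \<Rightarrow> real^'n \<Rightarrow> real^'n" where
  "conserved_vec M x = x + (\<Sum>i<nreac M. (rate M i * delay M i * mpow x (src M i)) *\<^sub>R src M i)"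

lemma cfun_const:
  assumes "valid_dms \<tau> M"
  shows "cfun M a (\<lambda>_. x) = a \<bullet> conserved_vec M x"
proof -
  have "integral {- delay M i..0} (\<lambda>s. mpow x (src M i)) = delay M i * mpow x (src M i)"
    if "i < nreac M" for i
    using assms that by (auto simp: valid_dms_def)
  then show ?thesis
    unfolding cfun_def conserved_vec_def
    by (intro arg_cong[where f = "\<lambda>v. a \<bullet> v"] arg_cong2[where f = "(+)"] refl sum.cong) auto
qed

lemma integral_mpow_nonneg: "0 \<le> integral S (\<lambda>s. mpow (f s) y)"
proof (cases "(\<lambda>s. mpow (f s) y) integrable_on S")
  case True then show ?thesis by (rule integral_nonneg) (simp add: mpow_nonneg)
qed (simp add: not_integrable_integral)

lemma cfun_eq_inner_pos:
  assumes v: "valid_dms \<tau> M" and pos: "\<forall>j. 0 < \<theta> 0 $ j"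
  obtains c where "\<forall>j. 0 < c $ j" and "\<And>a. cfun M a \<theta> = a \<bullet> c"
proof
  define c where "c = \<theta> 0 + (\<Sum>i<nreac M.
      (rate M i * integral {- delay M i..0} (\<lambda>s. mpow (\<theta> s) (src M i))) *\<^sub>R src M i)"
  show "cfun M a \<theta> = a \<bullet> c" for a by (simp add: cfun_def c_def)
  show "\<forall>j. 0 < c $ j"
  proof
    fix j
    have "0 \<le> (\<Sum>i<nreac M.
        rate M i * integral {- delay M i..0} (\<lambda>s. mpow (\<theta> s) (src M i)) * src M i $ j)"
      using v unfolding valid_dms_def
      by (intro sum_nonneg mult_nonneg_nonneg) (auto simp: less_imp_le integral_mpow_nonneg)
    then show "0 < c $ j" using pos[rule_format, of j] by (simp add: c_def)
  qed
qed

lemma conserved_vec_exp_vec_inj: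
  assumes v: "valid_dms \<tau> M" and d: "u1 - u2 \<in> orth (stoich M)"
    and eq: "\<forall>a\<in>orth (stoich M).
               a \<bullet> conserved_vec M (exp_vec u1) = a \<bullet> conserved_vec M (exp_vec u2)"
  shows "u1 = u2"
proof -
  define k where "k i = rate M i * delay M i" for i
  define g where "g j = (exp (u1 $ j) - exp (u2 $ j)) * (u1 $ j - u2 $ j)" for j
  define T1 where "T1 = (\<Sum>j\<in>UNIV. g j)"
  define T2 where "T2 = (\<Sum>i<nreac M. k i *
     ((exp (src M i \<bullet> u1) - exp (src M i \<bullet> u2)) * (src M i \<bullet> u1 - src M i \<bullet> u2)))"
  have "0 = (u1 - u2) \<bullet> (conserved_vec M (exp_vec u1) - conserved_vec M (exp_vec u2))"
    using eq d by (simp add: inner_diff_right)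
  also have "\<dots> = T1 + T2"
  proof -
    define S where "S v = (\<Sum>i<nreac M. (k i * mpow (exp_vec v) (src M i)) *\<^sub>R src M i)" for v
    have "conserved_vec M (exp_vec u1) - conserved_vec M (exp_vec u2)
        = (exp_vec u1 - exp_vec u2) + (S u1 - S u2)"
      unfolding conserved_vec_def S_def k_def by (simp add: algebra_simps)
    moreover have "(u1 - u2) \<bullet> (exp_vec u1 - exp_vec u2) = T1"
      by (simp add: T1_def g_def inner_vec_def exp_vec_def algebra_simps)
    moreover have "(u1 - u2) \<bullet> (S u1 - S u2) = T2"
      unfolding S_def T2_def inner_diff_right inner_sum_right sum_subtractf[symmetric]
      by (intro sum.cong refl) (simp add: mpow_exp_vec inner_diff_left inner_commute algebra_simps)
    ultimately show ?thesis by (simp only: inner_add_right)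
  qed
  finally have "T1 + T2 = 0" by simp
  moreover have "0 \<le> T2"
    using v unfolding T2_def k_def valid_dms_def
    by (intro sum_nonneg mult_nonneg_nonneg exp_monotone_product_nonneg) auto
  moreover have g_nonneg: "0 \<le> g j" for j
    unfolding g_def by (rule exp_monotone_product_nonneg)
  then have "0 \<le> T1" unfolding T1_def by (intro sum_nonneg)
  ultimately have "T1 = 0" by simp
  then have "\<forall>j\<in>UNIV. g j = 0"
    unfolding T1_def by (simp add: sum_nonneg_eq_0_iff g_nonneg)
  then show ?thesis by (simp add: g_def vec_eq_iff exp_monotone_product_eq_0_iff)
qed

text \<open>On u0 + S^\<bottom> the equations a \<bullet> conserved_vec M (exp_vec u) = a \<bullet> c, a \<in> S^\<bottom>, are the
  critical point equations of this strictly convex, coercive function.\<close>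

definition potential :: "'n::finite dms \<Rightarrow> real^'n \<Rightarrow> real^'n \<Rightarrow> real" where
  "potential M c u = (\<Sum>j\<in>UNIV. exp (u $ j))
     + (\<Sum>i<nreac M. rate M i * delay M i * exp (src M i \<bullet> u)) - c \<bullet> u"

lemma potential_directional_derivative:
  "((\<lambda>t. potential M c (u + t *\<^sub>R a)) has_real_derivative
      (a \<bullet> conserved_vec M (exp_vec u) - c \<bullet> a)) (at 0)"
proof -
  define k where "k i = rate M i * delay M i" for i
  have "(\<lambda>t. potential M c (u + t *\<^sub>R a)) = (\<lambda>t. (\<Sum>j\<in>UNIV. exp (u $ j + t * a $ j))
      + (\<Sum>i<nreac M. k i * exp (src M i \<bullet> u + t * (src M i \<bullet> a))) - (c \<bullet> u + t * (c \<bullet> a)))"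
    by (simp add: potential_def k_def inner_add_right)
  moreover have "((\<lambda>t. (\<Sum>j\<in>UNIV. exp (u $ j + t * a $ j))
      + (\<Sum>i<nreac M. k i * exp (src M i \<bullet> u + t * (src M i \<bullet> a))) - (c \<bullet> u + t * (c \<bullet> a)))
      has_real_derivative ((\<Sum>j\<in>UNIV. exp (u $ j) * a $ j)
      + (\<Sum>i<nreac M. k i * exp (src M i \<bullet> u) * (src M i \<bullet> a)) - c \<bullet> a)) (at 0)"
    by (auto intro!: derivative_eq_intros simp: ac_simps)
  moreover have "a \<bullet> conserved_vec M (exp_vec u) = (\<Sum>j\<in>UNIV. exp (u $ j) * a $ j)
      + (\<Sum>i<nreac M. k i * exp (src M i \<bullet> u) * (src M i \<bullet> a))"
  proof -
    have "a \<bullet> exp_vec u = (\<Sum>j\<in>UNIV. exp (u $ j) * a $ j)"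
      by (simp add: inner_vec_def exp_vec_def mult.commute)
    then show ?thesis
      unfolding conserved_vec_def inner_add_right inner_sum_right
      by (simp add: mpow_exp_vec k_def inner_commute mult_ac)
  qed
  ultimately show ?thesis by simp
qed

lemma continuous_on_potential: "continuous_on A (potential M c)"
  unfolding potential_def by (intro continuous_intros continuous_on_component)

lemma bounded_potential_sublevel:
  assumes v: "valid_dms \<tau> M" and c: "\<forall>j. 0 < c $ j"
  shows "bounded {u. potential M c u \<le> B}"
proof (rule bounded_subset[OF bounded_exp_minus_linear_sublevel[OF c]])
  show "{u. potential M c u \<le> B} \<subseteq> {u. (\<Sum>j\<in>UNIV. exp (u $ j) - c $ j * u $ j) \<le> B}"
  proof
    fix u assume "u \<in> {u. potential M c u \<le> B}"
    moreover have "0 \<le> (\<Sum>i<nreac M. rate M i * delay M i * exp (src M i \<bullet> u))"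
      using v unfolding valid_dms_def by (intro sum_nonneg) auto
    ultimately show "u \<in> {u. (\<Sum>j\<in>UNIV. exp (u $ j) - c $ j * u $ j) \<le> B}"
      by (simp add: potential_def inner_vec_def sum_subtractf mult.commute)
  qed
qed

lemma exists_conserved_vec_exp_vec_eq:
  assumes v: "valid_dms \<tau> M" and c: "\<forall>j. 0 < c $ j"
  shows "\<exists>u. u - u0 \<in> orth (stoich M) \<and>
             (\<forall>a\<in>orth (stoich M). a \<bullet> conserved_vec M (exp_vec u) = a \<bullet> c)"
proof -
  define S where "S = {u. u - u0 \<in> orth (stoich M)}"
  have "S = (\<lambda>u. u - u0) -` orth (stoich M)" by (auto simp: S_def)
  moreover have "closed ((\<lambda>u. u - u0) -` orth (stoich M))"
    by (intro continuous_closed_vimage closed_orth continuous_intros)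
  ultimately have "closed S" by simp
  moreover have "u0 \<in> S" by (simp add: S_def subspace_0[OF subspace_orth])
  moreover have "bounded {u\<in>S. potential M c u \<le> potential M c u0}"
    by (rule bounded_subset[OF bounded_potential_sublevel[OF v c]]) blast
  ultimately obtain u where u: "u \<in> S" and min: "\<forall>y\<in>S. potential M c u \<le> potential M c y"
    using continuous_attains_inf_coercive[OF _ _ continuous_on_potential] by blast
  have "a \<bullet> conserved_vec M (exp_vec u) = a \<bullet> c" if a: "a \<in> orth (stoich M)" for a
  proof -
    have "u + t *\<^sub>R a \<in> S" for t
    proof -
      have "(u - u0) + t *\<^sub>R a \<in> orth (stoich M)"
        using u a subspace_orth[of "stoich M"] unfolding S_def
        by (intro subspace_add subspace_scale) auto
      then show ?thesis by (simp add: S_def algebra_simps)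
    qed
    then have "\<forall>t. \<bar>0 - t\<bar> < 1 \<longrightarrow> potential M c (u + 0 *\<^sub>R a) \<le> potential M c (u + t *\<^sub>R a)"
      using min by simp
    from DERIV_local_min[OF potential_directional_derivative zero_less_one this]
    show ?thesis by (simp add: inner_commute)
  qed
  then show ?thesis using u unfolding S_def by blast
qed

lemma const_mem_Cnn: "\<forall>j. 0 < x $ j \<Longrightarrow> (\<lambda>_. x) \<in> Cnn \<tau>"
  by (auto simp: Cnn_def less_imp_le)

theorem DCB_ex1_pos_equilibrium_in_compat_class:
  assumes d: "DCB \<tau> M" and pos: "\<forall>j. 0 < \<theta> 0 $ j"
  shows "\<exists>!x. pos_equilibrium M x \<and> (\<lambda>_. x) \<in> compat_class \<tau> M \<theta>"
proof -
  have v: "valid_dms \<tau> M" using d by (simp add: DCB_def)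
  obtain xb where cb: "complex_balanced M xb" using d by (auto simp: DCB_def)
  obtain c where c: "\<forall>j. 0 < c $ j" and cf: "\<And>a. cfun M a \<theta> = a \<bullet> c"
    using cfun_eq_inner_pos[of \<tau> M \<theta>] v pos by blast
  have log_iff: "pos_equilibrium M (exp_vec u) \<and> (\<lambda>_. exp_vec u) \<in> compat_class \<tau> M \<theta> \<longleftrightarrow>
      u - ln_vec xb \<in> orth (stoich M) \<and>
      (\<forall>a\<in>orth (stoich M). a \<bullet> conserved_vec M (exp_vec u) = a \<bullet> c)" for u
    by (simp add: pos_equilibrium_iff exp_vec_pos complex_balanced_net_rate_eq_0_iff[OF cb v]
        compat_class_def const_mem_Cnn cfun_const[OF v] cf)
  show ?thesis
  proof (rule ex_ex1I)
    obtain u where "u - ln_vec xb \<in> orth (stoich M)"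
      and "\<forall>a\<in>orth (stoich M). a \<bullet> conserved_vec M (exp_vec u) = a \<bullet> c"
      using exists_conserved_vec_exp_vec_eq[OF v c] by blast
    then show "\<exists>x. pos_equilibrium M x \<and> (\<lambda>_. x) \<in> compat_class \<tau> M \<theta>"
      using log_iff by blast
  next
    fix x y
    assume x: "pos_equilibrium M x \<and> (\<lambda>_. x) \<in> compat_class \<tau> M \<theta>"
      and y: "pos_equilibrium M y \<and> (\<lambda>_. y) \<in> compat_class \<tau> M \<theta>"
    have x_exp: "x = exp_vec (ln_vec x)" and y_exp: "y = exp_vec (ln_vec y)"
      using x y by (simp_all add: pos_equilibrium_def exp_vec_ln_vec)
    have "ln_vec x - ln_vec xb \<in> orth (stoich M)"
      and x_eq: "\<forall>a\<in>orth (stoich M). a \<bullet> conserved_vec M (exp_vec (ln_vec x)) = a \<bullet> c"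
      using x log_iff[of "ln_vec x"] x_exp by auto
    moreover have "ln_vec y - ln_vec xb \<in> orth (stoich M)"
      and y_eq: "\<forall>a\<in>orth (stoich M). a \<bullet> conserved_vec M (exp_vec (ln_vec y)) = a \<bullet> c"
      using y log_iff[of "ln_vec y"] y_exp by auto
    ultimately have "ln_vec x - ln_vec y \<in> orth (stoich M)"
      using subspace_diff[OF subspace_orth] by fastforce
    then have "ln_vec x = ln_vec y"
      using conserved_vec_exp_vec_inj[OF v] x_eq y_eq by simp
    then show "x = y" using x_exp y_exp by metis
  qed
qed

section \<open>Linear conjugacy\<close>

abbreviation recip :: "real^'n::finite \<Rightarrow> real^'n" where
  "recip q \<equiv> \<chi> j. inverse (q $ j)"

lemma diagmul_recip_cancel:
  assumes "\<forall>j. 0 < q $ j"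
  shows "diagmul q (diagmul (recip q) z) = z" and "diagmul (recip q) (diagmul q z) = z"
  using assms by (simp_all add: diagmul_def vec_eq_iff less_imp_neq[symmetric])

lemma diagmul_pos_iff:
  "\<forall>j. 0 < q $ j \<Longrightarrow> (\<forall>j. 0 < diagmul q z $ j) \<longleftrightarrow> (\<forall>j. 0 < z $ j)"
  by (simp add: diagmul_def zero_less_mult_iff) (meson less_asym)

lemma recip_pos: "\<forall>j. 0 < q $ j \<Longrightarrow> \<forall>j. 0 < recip q $ j"
  by simp

lemma pos_equilibrium_conj_iff:
  assumes lc: "lin_conj \<tau> M Mt q"
  shows "pos_equilibrium M z \<longleftrightarrow> pos_equilibrium Mt (diagmul (recip q) z)"
proof -
  have q: "\<forall>j. 0 < q $ j" using lc by (simp add: lin_conj_def)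
  show ?thesis
  proof (cases "\<forall>j. 0 < z $ j")
    case True
    define x where "x = diagmul (recip q) z"
    have x: "\<forall>j. 0 < x $ j" using diagmul_pos_iff[OF recip_pos[OF q]] True by (simp add: x_def)
    then have "rhs M (\<lambda>_. diagmul q x) = diagmul q (rhs Mt (\<lambda>_. x))"
      using lc by (simp add: lin_conj_def Cpos_def)
    then have "net_rate M z = diagmul q (net_rate Mt x)"
      by (simp add: rhs_const x_def diagmul_recip_cancel[OF q])
    moreover have "diagmul q v = 0 \<longleftrightarrow> v = 0" for v
      using q by (simp add: diagmul_def vec_eq_iff less_imp_neq[symmetric])
    ultimately show ?thesis using True x by (simp add: pos_equilibrium_iff x_def)
  next
    case False
    then show ?thesis
      using diagmul_pos_iff[OF recip_pos[OF q]] by (auto simp: pos_equilibrium_iff)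
  qed
qed

lemma mpow_diagmul_recip:
  assumes "\<forall>j. 0 < q $ j"
  shows "mpow (diagmul (recip q) v) y = mpow v y * (\<Prod>j\<in>UNIV. q $ j powr (- (y $ j)))"
  unfolding mpow_def prod.distrib[symmetric]
proof (intro prod.cong refl)
  fix j
  have "q $ j \<noteq> 0" using assms by (metis less_irrefl)
  then show "(if y $ j = 0 then 1 else diagmul (recip q) v $ j powr y $ j) =
        (if y $ j = 0 then 1 else v $ j powr y $ j) * q $ j powr - y $ j"
    by (auto simp: diagmul_def powr_mult inverse_powr powr_minus)
qed

lemma inner_diagmul_commute: "diagmul p b \<bullet> z = b \<bullet> diagmul p z"
  by (simp add: inner_vec_def diagmul_def mult_ac)

lemma hfun_eq_cfun_recip:
  assumes q: "\<forall>j. 0 < q $ j"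
  shows "hfun Mt q (diagmul (recip q) b) \<psi> = cfun Mt b (\<lambda>s. diagmul (recip q) (\<psi> s))"
proof -
  have weights: "(\<Prod>j\<in>UNIV. q $ j powr (- (y $ j))) * integral S (\<lambda>s. mpow (\<psi> s) y) =
      integral S (\<lambda>s. mpow (diagmul (recip q) (\<psi> s)) y)" for S y
    by (simp add: mpow_diagmul_recip[OF q] mult.commute)
  show ?thesis
    unfolding hfun_def cfun_def inner_add_right inner_sum_right inner_scaleR_right
      inner_diagmul_commute diagmul_recip_cancel(2)[OF q]
    by (simp add: weights mult.assoc)
qed

lemma const_mem_Hset_iff:
  assumes q: "\<forall>j. 0 < q $ j" and z: "\<forall>j. 0 < z $ j"
  shows "(\<lambda>_. z) \<in> Hset \<tau> Mt q \<theta> \<longleftrightarrow>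
     (\<lambda>_. diagmul (recip q) z) \<in> compat_class \<tau> Mt (\<lambda>s. diagmul (recip q) (\<theta> s))"
  using const_mem_Cnn[OF z] const_mem_Cnn[of "diagmul (recip q) z"]
    diagmul_pos_iff[OF recip_pos[OF q]] z
  by (auto simp: Hset_def compat_class_def hfun_eq_cfun_recip[OF q])

theorem mainTheorem4:
  fixes M Mt :: "'n::finite dms" and q :: "real^'n" and \<tau> :: real
    and \<theta> :: "real \<Rightarrow> real^'n"
  assumes "valid_dms \<tau> M"
    and "DCB \<tau> Mt"
    and "lin_conj \<tau> M Mt q"
    and "\<theta> \<in> Cpos \<tau>"
  shows "(\<exists>!x. pos_equilibrium M x \<and> (\<lambda>_. x) \<in> Hset \<tau> Mt q \<theta>) \<and>
         (\<forall>x xt. pos_equilibrium M x \<and> (\<lambda>_. x) \<in> Hset \<tau> Mt q \<theta> \<and>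
            pos_equilibrium Mt xt \<and>
            (\<lambda>_. xt) \<in> compat_class \<tau> Mt (\<lambda>s. diagmul (\<chi> j. inverse (q $ j)) (\<theta> s))
            \<longrightarrow> x = diagmul q xt)"
proof -
  have v: "valid_dms \<tau> Mt" using assms(2) by (simp add: DCB_def)
  have q: "\<forall>j. 0 < q $ j" using assms(3) by (simp add: lin_conj_def)
  define \<theta>t where "\<theta>t = (\<lambda>s. diagmul (recip q) (\<theta> s))"
  have "\<forall>j. 0 < \<theta> 0 $ j" using assms(4) v by (simp add: Cpos_def valid_dms_def)
  then have "\<forall>j. 0 < \<theta>t 0 $ j" using diagmul_pos_iff[OF recip_pos[OF q]] by (simp add: \<theta>t_def)
  with assms(2) have ex1: "\<exists>!xt. pos_equilibrium Mt xt \<and> (\<lambda>_. xt) \<in> compat_class \<tau> Mt \<theta>t"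
    by (rule DCB_ex1_pos_equilibrium_in_compat_class)
  have conj: "pos_equilibrium M x \<and> (\<lambda>_. x) \<in> Hset \<tau> Mt q \<theta> \<longleftrightarrow>
      pos_equilibrium Mt (diagmul (recip q) x) \<and> (\<lambda>_. diagmul (recip q) x) \<in> compat_class \<tau> Mt \<theta>t"
    for x
    using pos_equilibrium_conj_iff[OF assms(3), of x] const_mem_Hset_iff[OF q, of x \<tau> Mt \<theta>]
    unfolding \<theta>t_def pos_equilibrium_def by blast
  show ?thesis
    unfolding \<theta>t_def[symmetric] using ex1 conj diagmul_recip_cancel[OF q] by metis
qed

end
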